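(* Let $n \ge 2$ be an integer and let $\mathcal{C}(I,n)$ denote the class of all vectors $\mathbf{X}=(X_1,\ldots,X_n)$ of independent random variables, each taking values in $[0,1]$. For $\mathbf{X}\in\mathcal{C}(I,n)$ put $U(\mathbf{X})=\max_{1\le i\le n} E X_i$ and $M(\mathbf{X})=E(\max_{1\le i\le n} X_i)$. Then $$\{(x,y)\mid x=U(\mathbf{X}),\ y=M(\mathbf{X}),\ \mathbf{X}\in\mathcal{C}(I,n)\} = \{(x,y)\mid 0\le x\le 1,\ x\le y\le 1-(1-x)^n\}.$$
   Context: $U(\mathbf{X})$ is the expected return of an observer who only knows the expectations of the $X_i$; $M(\mathbf{X})$ is the expected return of an observer (the "prophet") who sees all realizations and picks the largest. The set on the left is called the prophet region of $\mathcal{C}(I,n)$ for this pair of information levels. *)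

theory Defs
  imports "HOL-Probability.Probability"
begin

definition in_class_CI :: "'a measure \<Rightarrow> nat \<Rightarrow> (nat \<Rightarrow> 'a \<Rightarrow> real) \<Rightarrow> bool" where
  "in_class_CI M n X \<longleftrightarrow>
     prob_space M \<and>
     prob_space.indep_vars M (\<lambda>_. borel) X {..<n} \<and>
     (\<forall>i<n. \<forall>\<omega>\<in>space M. X i \<omega> \<in> {0..1})"

definition U_val :: "'a measure \<Rightarrow> nat \<Rightarrow> (nat \<Rightarrow> 'a \<Rightarrow> real) \<Rightarrow> real" where
  "U_val M n X = Max ((\<lambda>i. prob_space.expectation M (X i)) ` {..<n})"

definition M_val :: "'a measure \<Rightarrow> nat \<Rightarrow> (nat \<Rightarrow> 'a \<Rightarrow> real) \<Rightarrow> real" where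
  "M_val M n X = prob_space.expectation M (\<lambda>\<omega>. Max ((\<lambda>i. X i \<omega>) ` {..<n}))"

definition prophet_region :: "'a itself \<Rightarrow> nat \<Rightarrow> (real \<times> real) set" where
  "prophet_region _ n =
     {(U_val M n X, M_val M n X) | (M :: 'a measure) X. in_class_CI M n X}"

end

theory Submission
  imports Defs
begin

text \<open>For independent \<open>X\<^sub>i\<close> with values in \<open>[0,1]\<close>, pointwise
  \<open>max\<^sub>i X\<^sub>i \<le> 1 - \<Prod>\<^sub>i (1 - X\<^sub>i)\<close>, and by independence the right-hand side has expectation
  \<open>1 - \<Prod>\<^sub>i (1 - E X\<^sub>i) \<le> 1 - (1 - U)\<^sup>n\<close>; together with \<open>E X\<^sub>j \<le> E max\<^sub>i X\<^sub>i\<close> this gives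
  the inclusion. Conversely, a point \<open>(x, y)\<close> of the region is attained by \<open>X\<^sub>0 = x\<close>
  constant and \<open>X\<^sub>1, \<dots>, X\<^sub>n\<^sub>-\<^sub>1\<close> Bernoulli with a parameter \<open>p \<le> x\<close> chosen such that
  \<open>(1 - x) (1 - p)\<^sup>n\<^sup>-\<^sup>1 = 1 - y\<close>: as all but one of the variables are \<open>{0,1}\<close>-valued,
  the pointwise bound above is an equality.\<close>

lemma prod_le_factor:
  fixes a :: "'i \<Rightarrow> real"
  assumes "finite I" "k \<in> I" "\<And>i. i \<in> I \<Longrightarrow> a i \<in> {0..1}"
  shows "(\<Prod>i\<in>I. a i) \<le> a k"
proof -
  have "(\<Prod>i\<in>I. a i) = a k * (\<Prod>i\<in>I - {k}. a i)"
    using assms by (simp add: prod.remove)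
  also have "\<dots> \<le> a k * 1"
    using assms by (intro mult_left_mono prod_le_1) auto
  finally show ?thesis by simp
qed

lemma Max_le_one_minus_prod_complements:
  fixes a :: "'i \<Rightarrow> real"
  assumes "finite I" "I \<noteq> {}" "\<And>i. i \<in> I \<Longrightarrow> a i \<in> {0..1}"
  shows "Max (a ` I) \<le> 1 - (\<Prod>i\<in>I. 1 - a i)"
proof -
  have "Max (a ` I) \<in> a ` I"
    using assms by (intro Max_in) auto
  then obtain k where k: "k \<in> I" "Max (a ` I) = a k" by auto
  have "(\<Prod>i\<in>I. 1 - a i) \<le> 1 - a k"
    using assms k by (intro prod_le_factor) auto
  with k show ?thesis by simp
qed

lemma Max_eq_one_minus_prod_complements:
  fixes a :: "'i \<Rightarrow> real"
  assumes I: "finite I" "k \<in> I" and ak: "a k \<in> {0..1}"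
    and binary: "\<And>i. i \<in> I - {k} \<Longrightarrow> a i \<in> {0, 1}"
  shows "Max (a ` I) = 1 - (\<Prod>i\<in>I. 1 - a i)"
proof (cases "\<exists>j\<in>I - {k}. a j = 1")
  case True
  then obtain j where j: "j \<in> I" "a j = 1" by blast
  have "a i \<le> 1" if "i \<in> I" for i
    using that ak binary[of i] by (cases "i = k") auto
  with I j have "Max (a ` I) = 1"
    by (intro Max_eqI) auto
  moreover have "(\<Prod>i\<in>I. 1 - a i) = 0"
    using I j by (intro prod_zero) auto
  ultimately show ?thesis by simp
next
  case False
  with binary have zero: "a i = 0" if "i \<in> I - {k}" for i
    using that by blast
  have "a i \<le> a k" if "i \<in> I" for i
    using that ak zero[of i] by (cases "i = k") auto
  with I have "Max (a ` I) = a k"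
    by (intro Max_eqI) auto
  moreover have "(\<Prod>i\<in>I. 1 - a i) = 1 - a k"
    using I zero by (simp add: prod.remove)
  ultimately show ?thesis by simp
qed

lemma (in prob_space) integrable_unit_interval:
  fixes f :: "'a \<Rightarrow> real"
  assumes "f \<in> borel_measurable M" "\<And>\<omega>. \<omega> \<in> space M \<Longrightarrow> f \<omega> \<in> {0..1}"
  shows "integrable M f"
  using assms by (intro integrable_const_bound[where B=1]) auto

lemma (in prob_space) expectation_unit_interval:
  fixes f :: "'a \<Rightarrow> real"
  assumes "f \<in> borel_measurable M" "\<And>\<omega>. \<omega> \<in> space M \<Longrightarrow> f \<omega> \<in> {0..1}"
  shows "expectation f \<in> {0..1}"
proof -
  have "0 \<le> expectation f"
    using assms by (intro integral_nonneg_AE) auto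
  moreover have "expectation f \<le> expectation (\<lambda>_. 1)"
    using assms integrable_unit_interval[OF assms] by (intro integral_mono) auto
  ultimately show ?thesis by (simp add: prob_space)
qed

lemma (in prob_space) expectation_one_minus_prod_complements:
  fixes X :: "'i \<Rightarrow> 'a \<Rightarrow> real"
  assumes I: "finite I" and indep: "indep_vars (\<lambda>_. borel) X I"
    and X01: "\<And>i \<omega>. i \<in> I \<Longrightarrow> \<omega> \<in> space M \<Longrightarrow> X i \<omega> \<in> {0..1}"
  shows "expectation (\<lambda>\<omega>. 1 - (\<Prod>i\<in>I. 1 - X i \<omega>)) = 1 - (\<Prod>i\<in>I. 1 - expectation (X i))"
proof -
  have int: "integrable M (X i)" if "i \<in> I" for i
    using indep X01 that by (intro integrable_unit_interval) (auto simp: indep_vars_def)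
  have indep': "indep_vars (\<lambda>_. borel) (\<lambda>i \<omega>. 1 - X i \<omega>) I"
    by (rule indep_vars_compose2[OF indep]) auto
  have "integrable M (\<lambda>\<omega>. \<Prod>i\<in>I. 1 - X i \<omega>)"
    using int by (intro indep_vars_integrable[OF I indep']) auto
  moreover have "expectation (\<lambda>\<omega>. \<Prod>i\<in>I. 1 - X i \<omega>) = (\<Prod>i\<in>I. expectation (\<lambda>\<omega>. 1 - X i \<omega>))"
    using int by (intro indep_vars_lebesgue_integral[OF I indep']) auto
  moreover have "\<dots> = (\<Prod>i\<in>I. 1 - expectation (X i))"
    using int by (intro prod.cong) (auto simp: prob_space)
  ultimately show ?thesis by (simp add: prob_space)
qed

lemma in_class_CI_bounds:
  assumes "n > 0" and C: "in_class_CI M n X"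
  shows "0 \<le> U_val M n X \<and> U_val M n X \<le> 1 \<and> U_val M n X \<le> M_val M n X
     \<and> M_val M n X \<le> 1 - (1 - U_val M n X) ^ n"
proof -
  interpret prob_space M using C unfolding in_class_CI_def by auto
  have indep: "indep_vars (\<lambda>_. borel) X {..<n}"
    and X01: "\<And>i \<omega>. i < n \<Longrightarrow> \<omega> \<in> space M \<Longrightarrow> X i \<omega> \<in> {0..1}"
    using C unfolding in_class_CI_def by auto
  have X[measurable]: "X i \<in> borel_measurable M" if "i < n" for i
    using indep that unfolding indep_vars_def by auto
  define e where "e i = expectation (X i)" for i
  define m where "m \<omega> = Max ((\<lambda>i. X i \<omega>) ` {..<n})" for \<omega>
  have ne: "{..<n} \<noteq> {}" using \<open>n > 0\<close> by auto
  have e01: "e i \<in> {0..1}" if "i < n" for i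
    unfolding e_def using X01 that by (intro expectation_unit_interval) auto
  have U: "U_val M n X = Max (e ` {..<n})"
    unfolding U_val_def e_def ..
  moreover have "Max (e ` {..<n}) \<in> e ` {..<n}"
    using ne by (intro Max_in) auto
  ultimately obtain j where j: "j < n" "U_val M n X = e j" by auto
  have m[measurable]: "m \<in> borel_measurable M"
    unfolding m_def by (intro borel_measurable_Max) auto
  have m_le: "m \<omega> \<le> 1 - (\<Prod>i<n. 1 - X i \<omega>)" if "\<omega> \<in> space M" for \<omega>
    unfolding m_def using X01 that ne by (intro Max_le_one_minus_prod_complements) auto
  have m01: "m \<omega> \<in> {0..1}" if "\<omega> \<in> space M" for \<omega>
  proof -
    have "m \<omega> \<in> (\<lambda>i. X i \<omega>) ` {..<n}"
      unfolding m_def using ne by (intro Max_in) auto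
    then show ?thesis using X01 that by auto
  qed
  have e_le_U: "e i \<le> U_val M n X" if "i < n" for i
    unfolding U using that by simp
  have U_le_M: "U_val M n X \<le> M_val M n X"
    unfolding j M_val_def e_def using j(1) X01 m01
    by (intro integral_mono integrable_unit_interval) (auto simp: m_def)
  have "M_val M n X \<le> expectation (\<lambda>\<omega>. 1 - (\<Prod>i<n. 1 - X i \<omega>))"
    unfolding M_val_def m_def[symmetric] using X01 m01 m_le
    by (intro integral_mono integrable_unit_interval) (auto intro!: prod_nonneg prod_le_1)
  also have "\<dots> = 1 - (\<Prod>i<n. 1 - e i)"
    unfolding e_def using X01 by (intro expectation_one_minus_prod_complements[OF _ indep]) auto
  also have "\<dots> \<le> 1 - (\<Prod>i<n. 1 - U_val M n X)"
    using e01 e_le_U j by (intro diff_left_mono prod_mono) auto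
  finally have "M_val M n X \<le> 1 - (1 - U_val M n X) ^ n"
    by simp
  with U_le_M e01[OF j(1)] j(2) show ?thesis
    by simp
qed

lemma prophet_region_subset:
  assumes "n > 0"
  shows "prophet_region TYPE('a) n \<subseteq> {(x, y). 0 \<le> x \<and> x \<le> 1 \<and> x \<le> y \<and> y \<le> 1 - (1 - x) ^ n}"
proof
  fix z assume "z \<in> prophet_region TYPE('a) n"
  then obtain M :: "'a measure" and X where "z = (U_val M n X, M_val M n X)" "in_class_CI M n X"
    unfolding prophet_region_def by blast
  then show "z \<in> {(x, y). 0 \<le> x \<and> x \<le> 1 \<and> x \<le> y \<and> y \<le> 1 - (1 - x) ^ n}"
    using in_class_CI_bounds[OF assms] by simp
qed

lemma bernoulli_parameter_exists:
  fixes x y :: real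
  assumes n: "n \<ge> 2" and xy: "0 \<le> x" "x \<le> 1" "x \<le> y" "y \<le> 1 - (1 - x) ^ n"
  obtains p where "0 \<le> p" "p \<le> x" "(1 - x) * (1 - p) ^ (n - 1) = 1 - y"
proof (cases "x = 1")
  case True
  then have "y = 1" using xy n by (auto simp: power_0_left)
  then show ?thesis using that[of 0] True by simp
next
  case False
  then have x1: "x < 1" using xy by simp
  define r where "r = (1 - y) / (1 - x)"
  have k: "0 < n - 1" using n by simp
  have r1: "r \<le> 1" unfolding r_def using x1 xy by (simp add: divide_le_eq_1)
  have "(1 - x) * (1 - x) ^ (n - 1) = (1 - x) ^ n"
    using n by (cases n) simp_all
  then have "(1 - x) * (1 - x) ^ (n - 1) \<le> 1 - y" using xy by simp
  then have r0: "(1 - x) ^ (n - 1) \<le> r"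
    unfolding r_def using x1 by (simp add: pos_le_divide_eq mult.commute)
  moreover have "0 \<le> (1 - x) ^ (n - 1)" using xy by simp
  ultimately have "0 \<le> r" by linarith
  define p where "p = 1 - root (n - 1) r"
  have "root (n - 1) r \<le> 1" using real_root_le_mono[OF k r1] k by simp
  moreover have "1 - x \<le> root (n - 1) r"
    using real_root_le_mono[OF k r0] real_root_power_cancel[OF k, of "1 - x"] xy by simp
  moreover have "(1 - p) ^ (n - 1) = r" unfolding p_def using k \<open>0 \<le> r\<close> by simp
  ultimately show ?thesis using that[of p] x1 unfolding p_def r_def by auto
qed

lemma prophet_region_attained:
  fixes x y :: real
  assumes n: "n \<ge> 2" and xy: "0 \<le> x" "x \<le> 1" "x \<le> y" "y \<le> 1 - (1 - x) ^ n"
  shows "(x, y) \<in> prophet_region TYPE(nat \<Rightarrow> real) n"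
proof -
  obtain p where p: "0 \<le> p" "p \<le> x" "(1 - x) * (1 - p) ^ (n - 1) = 1 - y"
    using bernoulli_parameter_exists[OF assms] .
  define Q where "Q = Pi_pmf {..<n} 0 (\<lambda>_. map_pmf (\<lambda>b. if b then 1 else 0 :: real) (bernoulli_pmf p))"
  \<comment> \<open>\<open>f\<close> is \<open>[0,1]\<close>-valued on all reals, not just on the support \<open>{0,1}\<close>, because
    \<open>in_class_CI\<close> constrains \<open>X\<close> on all of \<open>space (measure_pmf Q) = UNIV\<close>.\<close>
  define f where "f i t = (if i = 0 then x else if t = 1 then 1 else 0 :: real)" for i :: nat and t :: real
  define X where "X i \<omega> = f i (\<omega> i)" for i :: nat and \<omega> :: "nat \<Rightarrow> real"
  have f01: "f i t \<in> {0..1}" for i t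
    unfolding f_def using xy by auto
  have C: "in_class_CI (measure_pmf Q) n X"
    unfolding in_class_CI_def
  proof (intro conjI)
    show "prob_space.indep_vars (measure_pmf Q) (\<lambda>_. borel) X {..<n}"
      unfolding X_def Q_def
      by (rule prob_space.indep_vars_compose2[OF measure_pmf.prob_space_axioms indep_vars_Pi_pmf])
        auto
  qed (use f01 X_def measure_pmf.prob_space_axioms in auto)
  have EX: "measure_pmf.expectation Q (X i) = (if i = 0 then x else p)" if "i < n" for i
  proof -
    have "measure_pmf.expectation Q (X i) = measure_pmf.expectation (map_pmf (\<lambda>\<omega>. \<omega> i) Q) (f i)"
      unfolding X_def by simp
    also have "map_pmf (\<lambda>\<omega>. \<omega> i) Q = map_pmf (\<lambda>b. if b then 1 else 0) (bernoulli_pmf p)"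
      unfolding Q_def using that by (simp add: Pi_pmf_component)
    finally show ?thesis
      using p(1,2) xy(2) by (cases "i = 0") (simp_all add: f_def algebra_simps)
  qed
  have "U_val (measure_pmf Q) n X = x"
    unfolding U_val_def using n EX p by (intro Max_eqI) (auto intro!: image_eqI[of _ _ 0])
  moreover have "M_val (measure_pmf Q) n X = y"
  proof -
    obtain m where m: "n = Suc m" using n by (cases n) auto
    have "M_val (measure_pmf Q) n X = measure_pmf.expectation Q (\<lambda>\<omega>. 1 - (\<Prod>i<n. 1 - X i \<omega>))"
      unfolding M_val_def using n f01
      by (intro Bochner_Integration.integral_cong refl Max_eq_one_minus_prod_complements)
        (auto simp: X_def f_def)
    also have "\<dots> = 1 - (\<Prod>i<n. 1 - measure_pmf.expectation Q (X i))"
      using C f01 unfolding in_class_CI_def X_def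
      by (intro prob_space.expectation_one_minus_prod_complements[OF measure_pmf.prob_space_axioms]) auto
    also have "\<dots> = 1 - (1 - x) * (1 - p) ^ (n - 1)"
      unfolding m using EX[unfolded m] by (simp add: prod.lessThan_Suc_shift del: prod.lessThan_Suc)
    finally show ?thesis using p by simp
  qed
  ultimately show ?thesis
    using C unfolding prophet_region_def by force
qed

theorem theorem1:
  fixes n :: nat
  assumes "n \<ge> 2"
  shows "prophet_region TYPE('a) n \<subseteq> {(x, y). 0 \<le> x \<and> x \<le> 1 \<and> x \<le> y \<and> y \<le> 1 - (1 - x) ^ n}
       \<and> prophet_region TYPE(nat \<Rightarrow> real) n = {(x, y). 0 \<le> x \<and> x \<le> 1 \<and> x \<le> y \<and> y \<le> 1 - (1 - x) ^ n}"
    (is "_ \<subseteq> ?S \<and> _")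
proof -
  from assms have "n > 0" by simp
  show ?thesis
  proof (intro conjI subset_antisym)
    show "prophet_region TYPE('a) n \<subseteq> ?S" "prophet_region TYPE(nat \<Rightarrow> real) n \<subseteq> ?S"
      by (rule prophet_region_subset[OF \<open>n > 0\<close>])+
    show "?S \<subseteq> prophet_region TYPE(nat \<Rightarrow> real) n"
    proof
      fix z assume "z \<in> ?S"
      then show "z \<in> prophet_region TYPE(nat \<Rightarrow> real) n"
        by (cases z) (simp add: prophet_region_attained[OF assms])
    qed
  qed
qed

end
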